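(* Let $V$ be a vertex operator algebra of CFT type which is strongly generated by a homogeneous subspace $U\subseteq V_+$. Let $M=\bigoplus_{n\ge0}M(n)$ be an admissible $V$-module such that $M=W+C_1(M)$ for some homogeneous subspace $W\subseteq M$. Then $M$ is spanned by the elements $u^1_{-n_1}\cdots u^r_{-n_r}w$ with $r\ge0$, $n_i\ge1$, $u^i\in U$ and $w\in W$ homogeneous. In particular, $M$ is strongly generated by $W$.
   Context: $V=\bigoplus_{n\ge0}V_n$ is of CFT type if $V_0=\mathbb{C}\mathbf{1}$; $V_+=\bigoplus_{n\ge1}V_n$. $V$ is strongly generated by $U$ if $V$ is spanned by $a^1_{-n_1}\cdots a^r_{-n_r}\mathbf{1}$ with $r\ge0$, $a^i\in U$, $n_i\ge1$ (where $Y(a,z)=\sum_na_nz^{-n-1}$). For the admissible module $M=\bigoplus_{n\ge0}M(n)$, $Y_M(a,z)=\sum_na_nz^{-n-1}$ and $a_nM(m)\subseteq M(m+\mathrm{wt}\,a-n-1)$ for homogeneous $a$; a homogeneous subspace means one spanned by elements lying in the $M(n)$. $C_1(M)$ is the span of $a_{-1}v$ for homogeneous $a\in V_+$ and $v\in M$. $M$ is strongly generated by a subset $W\subseteq M$ if $M$ is spanned by $a^1_{-n_1}\cdots a^k_{-n_k}w$ with $k\ge0$, $a^i\in V_+$ homogeneous, $n_i\ge1$, $w\in W$. *)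

theory Defs
  imports Complex_Main
begin

text \<open>Vertex operators Y(a,z) = sum_n a_n z^(-n-1) are modelled by their modes:
  Y a n v = a_n v (n an integer).\<close>

definition graded :: "(complex \<Rightarrow> 'b \<Rightarrow> 'b::ab_group_add) \<Rightarrow> (int \<Rightarrow> 'b set) \<Rightarrow> bool" where
  "graded s G \<longleftrightarrow>
     (\<forall>n. module.subspace s (G n)) \<and>
     (\<forall>S x. finite S \<and> (\<forall>i\<in>S. x i \<in> G i) \<and> (\<Sum>i\<in>S. x i) = 0 \<longrightarrow> (\<forall>i\<in>S. x i = 0)) \<and>
     module.span s (\<Union>n. G n) = UNIV"

definition truncated :: "('v \<Rightarrow> int \<Rightarrow> 'm \<Rightarrow> 'm::zero) \<Rightarrow> bool" where
  "truncated Y \<longleftrightarrow> (\<forall>a v. \<exists>N. \<forall>n\<ge>N. Y a n v = 0)"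

text \<open>Both sums are finite by truncation; this is expressed by requiring equality of
  all sufficiently long partial sums.\<close>
definition borcherds :: "(complex \<Rightarrow> 'm \<Rightarrow> 'm::ab_group_add) \<Rightarrow> ('v \<Rightarrow> int \<Rightarrow> 'v \<Rightarrow> 'v)
    \<Rightarrow> ('v \<Rightarrow> int \<Rightarrow> 'm \<Rightarrow> 'm) \<Rightarrow> bool" where
  "borcherds s YV YM \<longleftrightarrow> (\<forall>a b w m n k. \<exists>N0. \<forall>N\<ge>N0.
     (\<Sum>i<N. s ((of_int m) gchoose i) (YM (YV a (k + int i) b) (m + n - int i) w)) =
     (\<Sum>i<N. s ((-1)^i * ((of_int k) gchoose i)) (YM a (m + k - int i) (YM b (n + int i) w))
            - s ((-1)^i * ((of_int k) gchoose i) * ((-1) powi k)) (YM b (n + k - int i) (YM a (m + int i) w))))"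

definition is_VOA :: "(complex \<Rightarrow> 'v \<Rightarrow> 'v::ab_group_add) \<Rightarrow> (int \<Rightarrow> 'v set)
    \<Rightarrow> ('v \<Rightarrow> int \<Rightarrow> 'v \<Rightarrow> 'v) \<Rightarrow> 'v \<Rightarrow> 'v \<Rightarrow> bool" where
  "is_VOA s V Y vac \<omega> \<longleftrightarrow>
     vector_space s \<and> graded s V \<and>
     (\<forall>n. \<exists>B. finite B \<and> V n \<subseteq> module.span s B) \<and>
     (\<exists>N. \<forall>n<N. V n = {0}) \<and>
     (\<forall>a n. Vector_Spaces.linear s s (Y a n)) \<and>
     (\<forall>n v. Vector_Spaces.linear s s (\<lambda>a. Y a n v)) \<and>
     truncated Y \<and>
     (\<forall>n v. Y vac n v = (if n = -1 then v else 0)) \<and>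
     (\<forall>a. Y a (-1) vac = a \<and> (\<forall>n\<ge>0. Y a n vac = 0)) \<and>
     borcherds s Y Y \<and>
     \<omega> \<in> V 2 \<and>
     (\<exists>c::complex. \<forall>m n v.
        Y \<omega> (m+1) (Y \<omega> (n+1) v) - Y \<omega> (n+1) (Y \<omega> (m+1) v) =
          s (of_int (m - n)) (Y \<omega> (m+n+1) v) +
          (if m + n = 0 then s (((of_int m)^3 - of_int m) / 12 * c) v else 0)) \<and>
     (\<forall>n. \<forall>v\<in>V n. Y \<omega> 1 v = s (of_int n) v) \<and>
     (\<forall>a n v. Y (Y \<omega> 0 a) n v = s (- of_int n) (Y a (n - 1) v))"

definition cft_type :: "(complex \<Rightarrow> 'v \<Rightarrow> 'v::ab_group_add) \<Rightarrow> (int \<Rightarrow> 'v set) \<Rightarrow> 'v \<Rightarrow> bool" where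
  "cft_type s V vac \<longleftrightarrow> (\<forall>n<0. V n = {0}) \<and> V 0 = module.span s {vac}"

definition Vplus :: "(complex \<Rightarrow> 'v \<Rightarrow> 'v::ab_group_add) \<Rightarrow> (int \<Rightarrow> 'v set) \<Rightarrow> 'v set" where
  "Vplus s V = module.span s (\<Union>n\<in>{1..}. V n)"

definition is_admissible :: "(complex \<Rightarrow> 'v \<Rightarrow> 'v::ab_group_add) \<Rightarrow> (int \<Rightarrow> 'v set)
    \<Rightarrow> ('v \<Rightarrow> int \<Rightarrow> 'v \<Rightarrow> 'v) \<Rightarrow> 'v
    \<Rightarrow> (complex \<Rightarrow> 'm \<Rightarrow> 'm::ab_group_add) \<Rightarrow> (int \<Rightarrow> 'm set) \<Rightarrow> ('v \<Rightarrow> int \<Rightarrow> 'm \<Rightarrow> 'm) \<Rightarrow> bool" where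
  "is_admissible s V Y vac sM M YM \<longleftrightarrow>
     vector_space sM \<and> graded sM M \<and> (\<forall>n<0. M n = {0}) \<and>
     (\<forall>a n. Vector_Spaces.linear sM sM (YM a n)) \<and>
     (\<forall>n w. Vector_Spaces.linear s sM (\<lambda>a. YM a n w)) \<and>
     truncated YM \<and>
     (\<forall>n w. YM vac n w = (if n = -1 then w else 0)) \<and>
     borcherds sM Y YM \<and>
     (\<forall>k a n m. a \<in> V k \<longrightarrow> YM a n ` M m \<subseteq> M (m + k - n - 1))"

definition homogeneous_subspace :: "(complex \<Rightarrow> 'b \<Rightarrow> 'b::ab_group_add) \<Rightarrow> (int \<Rightarrow> 'b set) \<Rightarrow> 'b set \<Rightarrow> bool" where
  "homogeneous_subspace s G W \<longleftrightarrow> module.subspace s W \<and> W = module.span s (W \<inter> (\<Union>n. G n))"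

definition modes :: "('v \<Rightarrow> int \<Rightarrow> 'm \<Rightarrow> 'm) \<Rightarrow> ('v \<times> nat) list \<Rightarrow> 'm \<Rightarrow> 'm" where
  "modes Y l x = foldr (\<lambda>(a, n) y. Y a (- int n) y) l x"

definition C1 :: "(complex \<Rightarrow> 'v \<Rightarrow> 'v::ab_group_add) \<Rightarrow> (int \<Rightarrow> 'v set)
    \<Rightarrow> (complex \<Rightarrow> 'm \<Rightarrow> 'm::ab_group_add) \<Rightarrow> ('v \<Rightarrow> int \<Rightarrow> 'm \<Rightarrow> 'm) \<Rightarrow> 'm set" where
  "C1 s V sM YM = module.span sM {YM a (-1) v | a v. a \<in> Vplus s V \<and> (\<exists>n. a \<in> V n)}"

end

theory Submission
  imports Defs
begin

text \<open>Induction on the degree n. Write x \<in> M(n) as w + c with w \<in> W and c \<in> C_1(M); after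
  projecting to degree n, c is a combination of homogeneous a_{-1}v with wt a \<ge> 1, so v has degree
  below n. It remains to show that a_j v (j \<le> -1) is in the span when v has degree below n and
  a_j v has degree at most n. This is a second induction, on wt a: strong generation reduces a to
  1 or to u_{-m}b with u \<in> U, and the iterate formula expands (u_{-m}b)_j v into terms
  u_{-m-i}b_{j+i}v and b_{j-m-i}u_i v. In the first kind b_{j+i}v has degree below n, so it is in
  the span, which is closed under u_{-m-i}; in the second kind u_i v has degree below n and
  wt b < wt a.\<close>

lemma linear_span_into_subspace:
  assumes "Vector_Spaces.linear s1 s2 f" and "module.subspace s2 T"
    and "x \<in> module.span s1 A" and "\<And>a. a \<in> A \<Longrightarrow> f a \<in> T"
  shows "f x \<in> T"
proof -
  interpret Vector_Spaces.linear s1 s2 f by fact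
  have "vs1.span A \<subseteq> f -` T"
    using assms(2,4) by (intro vs1.span_minimal subspace_vimage) auto
  then show ?thesis using assms(3) by auto
qed

lemma graded_degree_unique:
  assumes "vector_space s" and "graded s G" and "x \<in> G a" "x \<in> G b" "a \<noteq> b"
  shows "x = 0"
proof -
  interpret vector_space s by fact
  have independent: "\<And>S x. finite S \<Longrightarrow> \<forall>i\<in>S. x i \<in> G i \<Longrightarrow> (\<Sum>i\<in>S. x i) = 0 \<Longrightarrow> \<forall>i\<in>S. x i = 0"
    using assms(2) unfolding graded_def by blast
  have "subspace (G b)" using assms(2) unfolding graded_def by blast
  then have "- x \<in> G b" using assms(4) by (rule subspace_neg)
  then have "\<forall>i\<in>{a, b}. (if i = a then x else - x) = 0"
    using assms(3,5) by (intro independent) auto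
  then show ?thesis by simp
qed

lemma graded_span_degree_component:
  assumes "vector_space s" and "graded s G" and "x \<in> G N" and "x \<in> module.span s B"
    and "\<And>b. b \<in> B \<Longrightarrow> \<exists>e. b \<in> G e"
  shows "x \<in> module.span s {b \<in> B. b \<in> G N}"
proof -
  interpret vector_space s by fact
  have independent: "\<And>S x. finite S \<Longrightarrow> \<forall>i\<in>S. x i \<in> G i \<Longrightarrow> (\<Sum>i\<in>S. x i) = 0 \<Longrightarrow> \<forall>i\<in>S. x i = 0"
    and G_subspace: "\<And>n. subspace (G n)"
    using assms(2) unfolding graded_def by blast+
  obtain t r where t: "finite t" "t \<subseteq> B" and x: "x = (\<Sum>b\<in>t. s (r b) b)"
    using assms(4) unfolding span_explicit by blast
  have "\<forall>b\<in>t. \<exists>e. b \<in> G e" using assms(5) t(2) by blast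
  then obtain deg where deg: "\<And>b. b \<in> t \<Longrightarrow> b \<in> G (deg b)"
    using bchoice by metis
  define E where "E = insert N (deg ` t)"
  define y where "y e = (\<Sum>b\<in>{b \<in> t. deg b = e}. s (r b) b)" for e
  define z where "z e = y e - (if e = N then x else 0)" for e
  have "finite E" using t(1) by (simp add: E_def)
  have "y e \<in> G e" for e
    unfolding y_def by (rule subspace_sum[OF G_subspace]) (auto intro: subspace_scale[OF G_subspace] deg)
  then have z_homogeneous: "\<forall>e\<in>E. z e \<in> G e"
    using assms(3) by (auto simp: z_def intro: subspace_diff[OF G_subspace] subspace_0[OF G_subspace])
  have "(\<Sum>e\<in>E. y e) = x"
    unfolding y_def x by (rule sum.group) (use t \<open>finite E\<close> in \<open>auto simp: E_def\<close>)
  then have "(\<Sum>e\<in>E. z e) = 0"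
    using \<open>finite E\<close> by (simp add: z_def sum_subtractf E_def)
  then have "z N = 0" using independent[OF \<open>finite E\<close> z_homogeneous] by (simp add: E_def)
  then have "x = y N" by (simp add: z_def)
  also have "y N \<in> span {b \<in> B. b \<in> G N}"
    unfolding y_def by (intro span_sum span_scale span_base) (use t deg in auto)
  finally show ?thesis .
qed

lemma graded_span_other_degrees:
  assumes "vector_space s" and "graded s G" and "x \<in> G k"
    and "x \<in> module.span s (\<Union>n\<in>S. G n)" and "k \<notin> S"
  shows "x = 0"
proof -
  interpret vector_space s by fact
  have "x \<in> span {b \<in> (\<Union>n\<in>S. G n). b \<in> G k}"
    using assms(1-4) by (rule graded_span_degree_component) blast
  also have "\<dots> \<subseteq> span {0}"
    using graded_degree_unique[OF assms(1,2)] assms(5) by (intro span_mono) blast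
  finally show ?thesis by simp
qed

lemma borcherds_iterate_formula:
  assumes "module sM" and "borcherds sM YV YM"
  shows "\<exists>N. YM (YV a k b) n w =
     (\<Sum>i<N. sM ((-1)^i * (of_int k gchoose i)) (YM a (k - int i) (YM b (n + int i) w))
          - sM ((-1)^i * (of_int k gchoose i) * (-1) powi k) (YM b (n + k - int i) (YM a (int i) w)))"
proof -
  interpret module sM by fact
  obtain N0 where N0: "\<forall>N\<ge>N0.
     (\<Sum>i<N. sM (of_int 0 gchoose i) (YM (YV a (k + int i) b) (0 + n - int i) w)) =
     (\<Sum>i<N. sM ((-1)^i * (of_int k gchoose i)) (YM a (0 + k - int i) (YM b (n + int i) w))
          - sM ((-1)^i * (of_int k gchoose i) * (-1) powi k) (YM b (n + k - int i) (YM a (0 + int i) w)))"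
    using assms(2) unfolding borcherds_def by blast
  have "(\<Sum>i<Suc N0. sM (of_int 0 gchoose i) (YM (YV a (k + int i) b) (0 + n - int i) w))
        = (\<Sum>i<Suc N0. if i = 0 then YM (YV a k b) n w else 0)"
    by (rule sum.cong) (auto simp: gbinomial_0_left)
  also have "\<dots> = YM (YV a k b) n w" by (simp add: sum.delta')
  finally show ?thesis
    using N0[rule_format, of "Suc N0"] by (intro exI[of _ "Suc N0"]) (simp del: sum.lessThan_Suc)
qed

locale vertex_module =
  fixes s :: "complex \<Rightarrow> 'v \<Rightarrow> 'v::ab_group_add" and V :: "int \<Rightarrow> 'v set"
    and Y :: "'v \<Rightarrow> int \<Rightarrow> 'v \<Rightarrow> 'v" and vac :: 'v
    and sM :: "complex \<Rightarrow> 'm \<Rightarrow> 'm::ab_group_add" and M :: "int \<Rightarrow> 'm set"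
    and YM :: "'v \<Rightarrow> int \<Rightarrow> 'm \<Rightarrow> 'm"
  assumes V_vector_space: "vector_space s"
    and V_graded: "graded s V"
    and V_negative: "n < 0 \<Longrightarrow> V n = {0}"
    and Y_linear: "Vector_Spaces.linear s s (Y a n)"
    and Y_linear_left: "Vector_Spaces.linear s s (\<lambda>a. Y a n v)"
    and admissible: "is_admissible s V Y vac sM M YM"
begin

sublocale V: vector_space s by (rule V_vector_space)

sublocale M: vector_space sM using admissible by (simp add: is_admissible_def)

lemma M_graded: "graded sM M"
  and M_negative: "n < 0 \<Longrightarrow> M n = {0}"
  and YM_linear: "Vector_Spaces.linear sM sM (YM a n)"
  and YM_linear_left: "Vector_Spaces.linear s sM (\<lambda>a. YM a n w)"
  and YM_vac: "YM vac n w = (if n = -1 then w else 0)"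
  and M_borcherds: "borcherds sM Y YM"
  using admissible by (simp_all add: is_admissible_def)

lemma YM_degree: "a \<in> V k \<Longrightarrow> x \<in> M e \<Longrightarrow> e' = e + k - n - 1 \<Longrightarrow> YM a n x \<in> M e'"
  using admissible unfolding is_admissible_def by blast

lemma M_subspace: "M.subspace (M n)"
  using M_graded by (simp add: graded_def)

lemma Y_zero_left [simp]: "Y 0 n v = 0"
  using module_hom.zero[OF Y_linear_left[folded module_hom_iff_linear]] by simp

lemma Y_zero_right [simp]: "Y a n 0 = 0"
  using module_hom.zero[OF Y_linear[folded module_hom_iff_linear]] by simp

lemma YM_zero_left [simp]: "YM 0 n w = 0"
  using module_hom.zero[OF YM_linear_left[folded module_hom_iff_linear]] by simp

lemma Vplus_degree_pos:
  assumes "a \<in> Vplus s V" and "a \<in> V k" and "a \<noteq> 0"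
  shows "k \<ge> 1"
  using graded_span_other_degrees[OF V_vector_space V_graded assms(2), of "{1..}"] assms
  by (auto simp: Vplus_def)

text \<open>The axioms do not state wt(u_k b) = wt u + wt b - k - 1 for V itself, so the degree of a
  mode of a product is computed in M through the iterate formula.\<close>
lemma product_mode_degree:
  assumes u: "u \<in> V p" and b: "b \<in> V q" and v: "v \<in> M d"
  shows "YM (Y u k b) j v \<in> M (d + p + q - k - j - 2)"
proof -
  obtain N where iterate: "YM (Y u k b) j v =
     (\<Sum>i<N. sM ((-1)^i * (of_int k gchoose i)) (YM u (k - int i) (YM b (j + int i) v))
          - sM ((-1)^i * (of_int k gchoose i) * (-1) powi k) (YM b (j + k - int i) (YM u (int i) v)))"
    using borcherds_iterate_formula[OF M.module_axioms M_borcherds] by blast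
  show ?thesis
    unfolding iterate
  proof (intro M.subspace_sum[OF M_subspace] M.subspace_diff[OF M_subspace]
      M.subspace_scale[OF M_subspace])
    fix i
    have "YM b (j + int i) v \<in> M (d + q - j - int i - 1)" by (rule YM_degree[OF b v]) simp
    then show "YM u (k - int i) (YM b (j + int i) v) \<in> M (d + p + q - k - j - 2)"
      by (rule YM_degree[OF u]) simp
    have "YM u (int i) v \<in> M (d + p - int i - 1)" by (rule YM_degree[OF u v]) simp
    then show "YM b (j + k - int i) (YM u (int i) v) \<in> M (d + p + q - k - j - 2)"
      by (rule YM_degree[OF b]) simp
  qed
qed

end

locale W_plus_C1_module = vertex_module s V Y vac sM M YM
  for s :: "complex \<Rightarrow> 'v \<Rightarrow> 'v::ab_group_add" and V Y vac
    and sM :: "complex \<Rightarrow> 'm \<Rightarrow> 'm::ab_group_add" and M YM +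
  fixes U :: "'v set" and W :: "'m set"
  assumes U_homogeneous: "homogeneous_subspace s V U"
    and U_Vplus: "U \<subseteq> Vplus s V"
    and U_strongly_generates:
      "module.span s {modes Y l vac | l. \<forall>(a, n)\<in>set l. a \<in> U \<and> n \<ge> 1} = UNIV"
    and W_homogeneous: "homogeneous_subspace sM M W"
    and W_plus_C1: "UNIV = {w + c | w c. w \<in> W \<and> c \<in> C1 s V sM YM}"
begin

definition UW_span :: "'m set" where
  "UW_span = M.span {modes YM l w | l w.
     (\<forall>(u, n)\<in>set l. u \<in> U \<and> (\<exists>p. u \<in> V p) \<and> n \<ge> 1) \<and> w \<in> W \<and> (\<exists>k. w \<in> M k)}"

lemma UW_span_subspace: "M.subspace UW_span"
  unfolding UW_span_def by simp

lemma W_in_UW_span: "w \<in> W \<Longrightarrow> w \<in> M k \<Longrightarrow> w \<in> UW_span"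
  unfolding UW_span_def by (intro M.span_base CollectI exI[of _ "[]"]) (auto simp: modes_def)

lemma UW_span_mode_closed:
  assumes "u \<in> U" and "u \<in> V p" and "n \<ge> 1" and "x \<in> UW_span"
  shows "YM u (- int n) x \<in> UW_span"
  using YM_linear UW_span_subspace assms(4)[unfolded UW_span_def]
proof (rule linear_span_into_subspace)
  fix g
  assume "g \<in> {modes YM l w | l w.
     (\<forall>(u, n)\<in>set l. u \<in> U \<and> (\<exists>p. u \<in> V p) \<and> n \<ge> 1) \<and> w \<in> W \<and> (\<exists>k. w \<in> M k)}"
  then obtain l w where g: "g = modes YM l w"
    and l: "\<forall>(u, n)\<in>set l. u \<in> U \<and> (\<exists>p. u \<in> V p) \<and> n \<ge> 1" and w: "w \<in> W" "\<exists>k. w \<in> M k"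
    by blast
  have "YM u (- int n) g = modes YM ((u, n) # l) w"
    by (simp add: g modes_def)
  moreover have "\<forall>(u', n')\<in>set ((u, n) # l). u' \<in> U \<and> (\<exists>p. u' \<in> V p) \<and> n' \<ge> 1"
    using l assms(1-3) by auto
  ultimately show "YM u (- int n) g \<in> UW_span"
    unfolding UW_span_def using w by (intro M.span_base) blast
qed

text \<open>Only the leftmost mode of a strong-generation monomial is kept; the rest of the monomial
  is absorbed into an arbitrary homogeneous b.\<close>
definition V_generators :: "'v set" where
  "V_generators = insert vac
     {Y u (- int m) b | u m b. u \<in> U \<and> (\<exists>p\<ge>1. u \<in> V p) \<and> (\<exists>q. b \<in> V q) \<and> m \<ge> 1}"

lemma leading_mode_in_span_V_generators:
  assumes "u \<in> U" and "m \<ge> 1"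
  shows "Y u (- int m) b \<in> V.span V_generators"
proof -
  have "u \<in> V.span (U \<inter> (\<Union>n. V n))"
    using U_homogeneous assms(1) by (simp add: homogeneous_subspace_def)
  have "b \<in> V.span (\<Union>n. V n)"
    using V_graded by (simp add: graded_def)
  show ?thesis
    using Y_linear_left V.subspace_span \<open>u \<in> V.span (U \<inter> (\<Union>n. V n))\<close>
  proof (rule linear_span_into_subspace)
    fix u' assume u': "u' \<in> U \<inter> (\<Union>n. V n)"
    show "Y u' (- int m) b \<in> V.span V_generators"
      using Y_linear V.subspace_span \<open>b \<in> V.span (\<Union>n. V n)\<close>
    proof (rule linear_span_into_subspace)
      fix b' assume b': "b' \<in> (\<Union>n. V n)"
      obtain p where p: "u' \<in> V p" using u' by blast
      show "Y u' (- int m) b' \<in> V.span V_generators"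
      proof (cases "u' = 0")
        case True
        then show ?thesis by (simp add: V.span_zero)
      next
        case False
        then have "p \<ge> 1" using Vplus_degree_pos U_Vplus u' p by blast
        then have "Y u' (- int m) b' \<in> V_generators"
          unfolding V_generators_def using u' p b' assms(2) by blast
        then show ?thesis by (rule V.span_base)
      qed
    qed
  qed
qed

lemma span_V_generators: "a \<in> V.span V_generators"
proof -
  have "modes Y l vac \<in> V.span V_generators" if "\<forall>(a, n)\<in>set l. a \<in> U \<and> n \<ge> 1" for l
  proof (cases l)
    case Nil
    then show ?thesis by (simp add: modes_def V_generators_def V.span_base)
  next
    case (Cons h l')
    obtain u m where "h = (u, m)" by fastforce
    then have "modes Y l vac = Y u (- int m) (modes Y l' vac)" and "u \<in> U" "m \<ge> 1"
      using Cons that by (auto simp: modes_def)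
    then show ?thesis using leading_mode_in_span_V_generators by simp
  qed
  then have "V.span {modes Y l vac | l. \<forall>(a, n)\<in>set l. a \<in> U \<and> n \<ge> 1} \<subseteq> V.span V_generators"
    by (intro V.span_minimal[OF _ V.subspace_span]) blast
  then show ?thesis using U_strongly_generates by blast
qed

lemma V_generator_mode_homogeneous:
  assumes "g \<in> V_generators" and "v \<in> M d"
  shows "\<exists>e. YM g j v \<in> M e"
proof -
  consider "g = vac" | u m b p q where "g = Y u (- int m) b" "u \<in> V p" "b \<in> V q"
    using assms(1) unfolding V_generators_def by blast
  then show ?thesis
  proof cases
    case 1
    then show ?thesis using assms(2) M.subspace_0[OF M_subspace] by (auto simp: YM_vac)
  next
    case 2
    then show ?thesis using product_mode_degree assms(2) by blast
  qed
qed

lemma product_mode_in_UW_span: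
  assumes lower: "\<And>d. d < n \<Longrightarrow> M d \<subseteq> UW_span"
    and IH: "\<And>a j d v. a \<in> V q \<Longrightarrow> j \<le> -1 \<Longrightarrow> d < n \<Longrightarrow> v \<in> M d \<Longrightarrow> d + q - j - 1 \<le> n
               \<Longrightarrow> YM a j v \<in> UW_span"
    and u: "u \<in> U" "u \<in> V p" "p \<ge> 1" and b: "b \<in> V q" "q \<ge> 0"
    and "m \<ge> 1" and "j \<le> -1" and v: "v \<in> M d" and deg: "d + p + q + int m - j - 2 \<le> n"
  shows "YM (Y u (- int m) b) j v \<in> UW_span"
proof -
  obtain N where iterate: "YM (Y u (- int m) b) j v =
     (\<Sum>i<N. sM ((-1)^i * (of_int (- int m) gchoose i)) (YM u (- int m - int i) (YM b (j + int i) v))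
          - sM ((-1)^i * (of_int (- int m) gchoose i) * (-1) powi (- int m))
               (YM b (j + (- int m) - int i) (YM u (int i) v)))"
    using borcherds_iterate_formula[OF M.module_axioms M_borcherds] by blast
  show ?thesis
    unfolding iterate
  proof (intro M.subspace_sum[OF UW_span_subspace] M.subspace_diff[OF UW_span_subspace]
      M.subspace_scale[OF UW_span_subspace])
    fix i
    have "YM b (j + int i) v \<in> M (d + q - j - int i - 1)" by (rule YM_degree[OF b(1) v]) simp
    moreover have "d + q - j - int i - 1 < n" using deg u(3) \<open>m \<ge> 1\<close> by linarith
    ultimately have "YM b (j + int i) v \<in> UW_span" using lower by blast
    then have "YM u (- int (m + i)) (YM b (j + int i) v) \<in> UW_span"
      using UW_span_mode_closed[OF u(1,2), of "m + i"] \<open>m \<ge> 1\<close> by simp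
    then show "YM u (- int m - int i) (YM b (j + int i) v) \<in> UW_span" by simp
    have "YM u (int i) v \<in> M (d + p - int i - 1)" by (rule YM_degree[OF u(2) v]) simp
    moreover have "d + p - int i - 1 < n" and "(d + p - int i - 1) + q - (j - int m - int i) - 1 \<le> n"
      using deg b(2) \<open>m \<ge> 1\<close> \<open>j \<le> -1\<close> by linarith+
    ultimately show "YM b (j + - int m - int i) (YM u (int i) v) \<in> UW_span"
      using IH[OF b(1)] \<open>m \<ge> 1\<close> \<open>j \<le> -1\<close> by simp
  qed
qed

lemma V_generator_mode_in_UW_span:
  assumes lower: "\<And>d. d < n \<Longrightarrow> M d \<subseteq> UW_span"
    and IH: "\<And>Q a j d v. Q < K \<Longrightarrow> a \<in> V (int Q) \<Longrightarrow> j \<le> -1 \<Longrightarrow> d < n \<Longrightarrow> v \<in> M d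
               \<Longrightarrow> d + int Q - j - 1 \<le> n \<Longrightarrow> YM a j v \<in> UW_span"
    and g: "g \<in> V_generators" and "j \<le> -1" and "d < n" and v: "v \<in> M d"
    and y: "YM g j v \<in> M (d + int K - j - 1)" and deg: "d + int K - j - 1 \<le> n"
  shows "YM g j v \<in> UW_span"
proof -
  consider "g = vac"
    | u m b p q where "g = Y u (- int m) b" "u \<in> U" "u \<in> V p" "p \<ge> 1" "b \<in> V q" "m \<ge> 1"
    using g unfolding V_generators_def by blast
  then show ?thesis
  proof cases
    case 1
    then show ?thesis
      using v lower[OF \<open>d < n\<close>] M.subspace_0[OF UW_span_subspace] by (auto simp: YM_vac)
  next
    case (2 u m b p q)
    show ?thesis
    proof (cases "YM g j v = 0")
      case True
      then show ?thesis by (simp add: M.subspace_0[OF UW_span_subspace])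
    next
      case False
      have "YM g j v \<in> M (d + p + q + int m - j - 2)"
        using product_mode_degree[OF 2(3,5) v, of "- int m" j] 2(1) by simp
      then have K: "int K = p + q + int m - 1"
        using graded_degree_unique[OF M.vector_space_axioms M_graded y] False by fastforce
      have "b \<noteq> 0" using False 2(1) by auto
      then have "q \<ge> 0" using V_negative[of q] 2(5) by fastforce
      then obtain Q where Q: "q = int Q" by (metis nonneg_int_cases)
      then have "Q < K" using K 2(4,6) by linarith
      have "b \<in> V (int Q)" "int Q \<ge> 0" using 2(5) Q by simp_all
      from product_mode_in_UW_span[OF lower IH[OF \<open>Q < K\<close>] 2(2-4) this 2(6) \<open>j \<le> -1\<close> v]
      show ?thesis using 2(1) Q K deg by simp
    qed
  qed
qed

lemma negative_mode_in_UW_span: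
  assumes lower: "\<And>d. d < n \<Longrightarrow> M d \<subseteq> UW_span"
  shows "a \<in> V (int K) \<Longrightarrow> j \<le> -1 \<Longrightarrow> d < n \<Longrightarrow> v \<in> M d \<Longrightarrow> d + int K - j - 1 \<le> n
         \<Longrightarrow> YM a j v \<in> UW_span"
proof (induction K arbitrary: a j d v rule: less_induct)
  case (less K)
  let ?N = "d + int K - j - 1"
  have "YM a j v \<in> M ?N" using YM_degree less.prems by simp
  moreover have "YM a j v \<in> M.span ((\<lambda>g. YM g j v) ` V_generators)"
    using span_V_generators
    by (rule linear_span_into_subspace[OF YM_linear_left M.subspace_span]) (auto intro: M.span_base)
  ultimately have "YM a j v \<in> M.span {y \<in> (\<lambda>g. YM g j v) ` V_generators. y \<in> M ?N}"
    using V_generator_mode_homogeneous less.prems(4)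
    by (intro graded_span_degree_component[OF M.vector_space_axioms M_graded]) auto
  also have "\<dots> \<subseteq> UW_span"
    using V_generator_mode_in_UW_span[OF lower less.IH] less.prems
    by (intro M.span_minimal UW_span_subspace) auto
  finally show ?case .
qed

definition W_C1_generators :: "'m set" where
  "W_C1_generators = (W \<inter> (\<Union>n. M n))
     \<union> {YM a (-1) v | a v k d. a \<in> Vplus s V \<and> a \<in> V k \<and> v \<in> M d}"

lemma span_W_C1_generators: "x \<in> M.span W_C1_generators"
proof -
  obtain w c where x: "x = w + c" and w: "w \<in> W" and c: "c \<in> C1 s V sM YM"
    using W_plus_C1 by blast
  have "w \<in> M.span W_C1_generators"
    using w W_homogeneous M.span_mono[of "W \<inter> (\<Union>n. M n)" W_C1_generators]
    unfolding homogeneous_subspace_def W_C1_generators_def by blast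
  moreover have "YM a (-1) v \<in> M.span W_C1_generators" if "a \<in> Vplus s V" "a \<in> V k" for a v k
  proof -
    have "v \<in> M.span (\<Union>n. M n)" using M_graded by (simp add: graded_def)
    then show ?thesis
      by (rule linear_span_into_subspace[OF YM_linear M.subspace_span])
        (use that in \<open>auto simp: W_C1_generators_def intro!: M.span_base\<close>)
  qed
  then have "C1 s V sM YM \<subseteq> M.span W_C1_generators"
    unfolding C1_def by (intro M.span_minimal[OF _ M.subspace_span]) blast
  ultimately show ?thesis using x c M.span_add by blast
qed

lemma W_C1_generator_in_UW_span:
  assumes lower: "\<And>d. d < n \<Longrightarrow> M d \<subseteq> UW_span"
    and "y \<in> W_C1_generators" and "y \<in> M n"
  shows "y \<in> UW_span"
proof -
  consider "y \<in> W"
    | a v k d where "y = YM a (-1) v" "a \<in> Vplus s V" "a \<in> V k" "v \<in> M d"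
    using assms(2) unfolding W_C1_generators_def by blast
  then show ?thesis
  proof cases
    case 1
    then show ?thesis using W_in_UW_span assms(3) by blast
  next
    case (2 a v k d)
    show ?thesis
    proof (cases "y = 0")
      case True
      then show ?thesis by (simp add: M.subspace_0[OF UW_span_subspace])
    next
      case False
      then have "k \<ge> 1" using Vplus_degree_pos 2 by fastforce
      have "y \<in> M (d + k)" unfolding 2(1) by (rule YM_degree[OF 2(3,4)]) simp
      then have "n = d + k"
        using graded_degree_unique[OF M.vector_space_axioms M_graded assms(3)] False by blast
      have a: "a \<in> V (int (nat k))" and "d < n" and deg: "d + int (nat k) - (-1) - 1 \<le> n"
        using 2(3) \<open>n = d + k\<close> \<open>k \<ge> 1\<close> by simp_all
      show ?thesis
        using negative_mode_in_UW_span[where n = n, OF lower a _ \<open>d < n\<close> 2(4) deg] 2(1) by simp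
    qed
  qed
qed

lemma M_subset_UW_span: "M n \<subseteq> UW_span"
proof (induction "nat n" arbitrary: n rule: less_induct)
  case less
  have lower: "M d \<subseteq> UW_span" if "d < n" for d
  proof (cases "d < 0")
    case True
    then show ?thesis using M_negative M.subspace_0[OF UW_span_subspace] by simp
  next
    case False
    then show ?thesis using less that by simp
  qed
  have homogeneous: "\<exists>e. y \<in> M e" if "y \<in> W_C1_generators" for y
    using that YM_degree unfolding W_C1_generators_def by blast
  show ?case
  proof
    fix x assume "x \<in> M n"
    then have "x \<in> M.span {y \<in> W_C1_generators. y \<in> M n}"
      using span_W_C1_generators homogeneous
      by (intro graded_span_degree_component[OF M.vector_space_axioms M_graded])
    also have "\<dots> \<subseteq> UW_span"
      using W_C1_generator_in_UW_span[OF lower] by (intro M.span_minimal UW_span_subspace) auto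
    finally show "x \<in> UW_span" .
  qed
qed

lemma UW_span_UNIV: "UW_span = UNIV"
proof -
  have "M.span (\<Union>n. M n) \<subseteq> UW_span"
    using M_subset_UW_span by (intro M.span_minimal UW_span_subspace) blast
  then show ?thesis using M_graded by (auto simp: graded_def)
qed

end

theorem proposition4p2:
  fixes s :: "complex \<Rightarrow> 'v \<Rightarrow> 'v::ab_group_add"
    and V :: "int \<Rightarrow> 'v set" and Y :: "'v \<Rightarrow> int \<Rightarrow> 'v \<Rightarrow> 'v" and vac \<omega> :: 'v
    and sM :: "complex \<Rightarrow> 'm \<Rightarrow> 'm::ab_group_add"
    and M :: "int \<Rightarrow> 'm set" and YM :: "'v \<Rightarrow> int \<Rightarrow> 'm \<Rightarrow> 'm"
    and U :: "'v set" and W :: "'m set"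
  assumes "is_VOA s V Y vac \<omega>"
    and "cft_type s V vac"
    and "homogeneous_subspace s V U"
    and "U \<subseteq> Vplus s V"
    and "module.span s {modes Y l vac | l. \<forall>(a, n)\<in>set l. a \<in> U \<and> n \<ge> 1} = UNIV"
    and "is_admissible s V Y vac sM M YM"
    and "homogeneous_subspace sM M W"
    and "UNIV = {w + c | w c. w \<in> W \<and> c \<in> C1 s V sM YM}"
  shows "module.span sM {modes YM l w | l w. (\<forall>(u, n)\<in>set l. u \<in> U \<and> n \<ge> 1) \<and> w \<in> W \<and> (\<exists>k. w \<in> M k)} = UNIV
       \<and> module.span sM {modes YM l w | l w.
            (\<forall>(a, n)\<in>set l. a \<in> Vplus s V \<and> (\<exists>k. a \<in> V k) \<and> n \<ge> 1) \<and> w \<in> W} = UNIV"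
proof -
  have "vertex_module s V Y vac sM M YM"
    using assms(1,2,6) by (simp add: vertex_module_def is_VOA_def cft_type_def)
  then interpret W_plus_C1_module s V Y vac sM M YM U W
    using assms(3-8) by (simp add: W_plus_C1_module_def W_plus_C1_module_axioms_def)
  have "UW_span \<subseteq> M.span {modes YM l w | l w.
      (\<forall>(u, n)\<in>set l. u \<in> U \<and> n \<ge> 1) \<and> w \<in> W \<and> (\<exists>k. w \<in> M k)}"
    unfolding UW_span_def by (rule M.span_mono) blast
  moreover have "UW_span \<subseteq> M.span {modes YM l w | l w.
      (\<forall>(a, n)\<in>set l. a \<in> Vplus s V \<and> (\<exists>k. a \<in> V k) \<and> n \<ge> 1) \<and> w \<in> W}"
    unfolding UW_span_def using assms(4) by (intro M.span_mono) blast
  ultimately show ?thesis using UW_span_UNIV by auto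
qed

end
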